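(* Let $n\ge1$, $R_0,R_1\in SO(n)$ and $h>0$. For each $t\in[0,h]$ let $A(t)=\frac{h-t}{h}R_0+\frac{t}{h}R_1$, and assume $A(t)$ is nonsingular for all $t\in[0,h]$. Let $A(t)=Q(t)Y(t)$ be the polar decomposition of $A(t)$, with $Q(t)$ orthogonal and $Y(t)$ symmetric positive definite. Then for $t\in[0,h]$, \[\dot Y(t)=Y(t)\,\mathrm{sym}\big(A(t)^{-1}\dot A(t)\big),\qquad \dot Q(t)=Q(t)\,\mathrm{skew}\big(A(t)^{-1}\dot A(t)\big).\]
   Context: $SO(n)=\{Q\in\mathbb{R}^{n\times n}:Q^TQ=I,\ \det Q>0\}$. For a square matrix $B$, $\mathrm{sym}(B)=\frac12(B+B^T)$ and $\mathrm{skew}(B)=\frac12(B-B^T)$. Overdots denote derivatives with respect to $t$. *)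

theory Defs
  imports "HOL-Analysis.Analysis"
begin

definition SO :: "(real^'n^'n) set" where
  "SO = {Q. orthogonal_matrix Q \<and> det Q > 0}"

definition msym :: "real^'n^'n \<Rightarrow> real^'n^'n" where
  "msym B = (1/2) *\<^sub>R (B + transpose B)"

definition mskew :: "real^'n^'n \<Rightarrow> real^'n^'n" where
  "mskew B = (1/2) *\<^sub>R (B - transpose B)"

definition spd :: "real^'n^'n \<Rightarrow> bool" where
  "spd Y \<longleftrightarrow> transpose Y = Y \<and> (\<forall>x. x \<noteq> 0 \<longrightarrow> 0 < x \<bullet> (Y *v x))"

end

theory Submission
  imports Defs
begin

text \<open>
  Write \<open>A(t) = R0 M(t)\<close> with \<open>M(t) = (1 - t/h) I + (t/h) R\<close> and the rotation \<open>R = R0\<^sup>T R1\<close>.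
  Then \<open>Y(t)\<^sup>2 = A\<^sup>T A = M\<^sup>T M\<close> commutes with R, so by uniqueness of positive definite square
  roots \<open>Y(t)\<close> commutes with R, hence with M, with \<open>M\<^sup>-\<^sup>1\<close> and with \<open>N = A\<^sup>-\<^sup>1 A' = M\<^sup>-\<^sup>1 R0\<^sup>T A'\<close>.
  This commutation makes \<open>Z = Y sym N\<close> a solution of the Lyapunov equation \<open>Y Z + Z Y = (A\<^sup>T A)'\<close>
  and splits \<open>A' = Q Z + (Q skew N) Y\<close>. As \<open>Y(s)\<^sup>2\<close> is quadratic in s, the coercivity bound
  \<open>c \<parallel>E\<parallel> \<le> \<parallel>Y\<^sub>1 E + E Y\<^sub>2\<parallel>\<close> (for \<open>Y\<^sub>1\<close> positive semidefinite, \<open>Y\<^sub>2 \<ge> c\<close>) shows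
  \<open>Y(s) - Y(t) - (s - t) Z = O((s - t)\<^sup>2)\<close>; the same bound for Q then follows from \<open>Q(s) Y(s) = A(s)\<close>.
\<close>

lemma matrix_add_rdistrib:
  fixes A B :: "'a::semiring_1^'n^'m" and C :: "'a^'p^'n"
  shows "(A + B) ** C = A ** C + B ** C"
  by (simp add: matrix_matrix_mult_def vec_eq_iff algebra_simps sum.distrib)

lemma matrix_diff_ldistrib:
  fixes A :: "'a::ring_1^'n^'m" and B C :: "'a^'p^'n"
  shows "A ** (B - C) = A ** B - A ** C"
  by (simp add: matrix_matrix_mult_def vec_eq_iff algebra_simps sum_subtractf)

lemma matrix_diff_rdistrib:
  fixes A B :: "'a::ring_1^'n^'m" and C :: "'a^'p^'n"
  shows "(A - B) ** C = A ** C - B ** C"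
  by (simp add: matrix_matrix_mult_def vec_eq_iff algebra_simps sum_subtractf)

lemma matrix_scaleR_left:
  fixes A :: "'a::real_algebra_1^'n^'m" and B :: "'a^'p^'n"
  shows "(k *\<^sub>R A) ** B = k *\<^sub>R (A ** B)"
  by (simp add: scalar_matrix_assoc)

lemma matrix_scaleR_right:
  fixes A :: "'a::real_algebra_1^'n^'m" and B :: "'a^'p^'n"
  shows "A ** (k *\<^sub>R B) = k *\<^sub>R (A ** B)"
  by (simp add: matrix_matrix_mult_def vec_eq_iff scaleR_sum_right)

lemma matrix_uminus_left:
  fixes A :: "'a::ring_1^'n^'m" and B :: "'a^'p^'n"
  shows "(- A) ** B = - (A ** B)"
  by (simp add: matrix_matrix_mult_def vec_eq_iff sum_negf)

lemma matrix_uminus_right: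
  fixes A :: "'a::ring_1^'n^'m" and B :: "'a^'p^'n"
  shows "A ** (- B) = - (A ** B)"
  by (simp add: matrix_matrix_mult_def vec_eq_iff sum_negf)

lemma transpose_add: "transpose (A + B) = transpose A + transpose (B :: 'a::plus^'n^'m)"
  by (simp add: transpose_def vec_eq_iff)

lemma transpose_diff: "transpose (A - B) = transpose A - transpose (B :: 'a::minus^'n^'m)"
  by (simp add: transpose_def vec_eq_iff)

lemma transpose_uminus: "transpose (- A) = - transpose (A :: 'a::uminus^'n^'m)"
  by (simp add: transpose_def vec_eq_iff)

lemmas matrix_ring_simps =
  matrix_add_ldistrib matrix_add_rdistrib matrix_diff_ldistrib matrix_diff_rdistrib
  matrix_scaleR_left matrix_scaleR_right matrix_uminus_left matrix_uminus_right
  transpose_add transpose_diff transpose_uminus transpose_scalar matrix_transpose_mul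

lemma bounded_bilinear_matrix_mult:
  "bounded_bilinear ((**) :: real^'n^'n \<Rightarrow> real^'n^'n \<Rightarrow> real^'n^'n)"
  unfolding bilinear_conv_bounded_bilinear[symmetric] bilinear_def
  by (auto intro!: linearI simp: matrix_ring_simps)

lemma matrix_inv_right: "invertible A \<Longrightarrow> A ** matrix_inv A = mat 1"
  and matrix_inv_left: "invertible A \<Longrightarrow> matrix_inv A ** A = mat 1"
  for A :: "'a::semiring_1^'n^'m"
  using someI_ex[of "\<lambda>A'. A ** A' = mat 1 \<and> A' ** A = mat 1"]
  unfolding matrix_inv_def invertible_def by auto

lemma spd_nonneg: "spd Y \<Longrightarrow> 0 \<le> x \<bullet> (Y *v x)"
  unfolding spd_def by (cases "x = 0") (auto intro: less_imp_le)

lemma spd_coercive: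
  fixes Y :: "real^'n^'n"
  assumes "spd Y"
  obtains c where "c > 0" "\<And>x. c * (norm x)\<^sup>2 \<le> x \<bullet> (Y *v x)"
proof -
  let ?q = "\<lambda>x::real^'n. x \<bullet> (Y *v x)"
  have "continuous_on (sphere 0 1) ?q"
    by (intro continuous_on_inner continuous_on_id linear_continuous_on_compose[OF continuous_on_id]) simp
  then obtain x0 where x0: "x0 \<in> sphere 0 1" "\<forall>y\<in>sphere 0 1. ?q x0 \<le> ?q y"
    using continuous_attains_inf[OF compact_sphere, of 0 1] by force
  then have "x0 \<noteq> 0" by auto
  then have pos: "?q x0 > 0" using assms unfolding spd_def by blast
  have "?q x0 * (norm x)\<^sup>2 \<le> ?q x" for x
  proof (cases "x = 0")
    case False
    define u where "u = (1 / norm x) *\<^sub>R x"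
    have "u \<in> sphere 0 1" using False by (simp add: u_def)
    then have "?q x0 \<le> ?q u" using x0(2) by blast
    moreover have "?q x = (norm x)\<^sup>2 * ?q u"
      using False by (simp add: u_def matrix_vector_mult_scaleR power2_eq_square)
    ultimately show ?thesis by (metis mult.commute mult_right_mono zero_le_power2)
  qed simp
  with pos that show ?thesis by blast
qed

lemma inner_sylvester_lower_bound:
  fixes Y1 Y2 E :: "real^'n^'n"
  assumes psd: "\<And>x. 0 \<le> x \<bullet> (Y1 *v x)" and coercive: "\<And>x. c * (norm x)\<^sup>2 \<le> x \<bullet> (Y2 *v x)"
    and sym: "transpose Y2 = Y2"
  shows "c * (norm E)\<^sup>2 \<le> E \<bullet> (Y1 ** E + E ** Y2)"
proof -
  have "E \<bullet> (Y1 ** E) = (\<Sum>i\<in>UNIV. \<Sum>j\<in>UNIV. E$i$j * (\<Sum>k\<in>UNIV. Y1$i$k * E$k$j))"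
    by (simp add: inner_vec_def matrix_matrix_mult_def)
  also have "\<dots> = (\<Sum>j\<in>UNIV. column j E \<bullet> (Y1 *v column j E))"
    by (subst sum.swap) (simp add: inner_vec_def matrix_vector_mult_def column_def)
  finally have cols: "E \<bullet> (Y1 ** E) = (\<Sum>j\<in>UNIV. column j E \<bullet> (Y1 *v column j E))" .
  have "Y2 $ j $ k = Y2 $ k $ j" for j k
    using sym by (metis transpose_def vec_lambda_beta)
  then have rows: "E \<bullet> (E ** Y2) = (\<Sum>i\<in>UNIV. E$i \<bullet> (Y2 *v E$i))"
    by (simp add: inner_vec_def matrix_matrix_mult_def matrix_vector_mult_def sum_distrib_left mult_ac)
  have "0 \<le> E \<bullet> (Y1 ** E)"
    unfolding cols by (intro sum_nonneg psd)
  moreover have "c * (norm E)\<^sup>2 = (\<Sum>i\<in>UNIV. c * (norm (E$i))\<^sup>2)"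
    by (simp add: power2_norm_eq_inner inner_vec_def sum_distrib_left)
  then have "c * (norm E)\<^sup>2 \<le> E \<bullet> (E ** Y2)"
    unfolding rows by (simp add: sum_mono coercive)
  ultimately show ?thesis by (simp add: inner_add_right)
qed

lemma norm_sylvester_lower_bound:
  fixes Y1 Y2 E :: "real^'n^'n"
  assumes "\<And>x. 0 \<le> x \<bullet> (Y1 *v x)" "\<And>x. c * (norm x)\<^sup>2 \<le> x \<bullet> (Y2 *v x)"
    and "transpose Y2 = Y2"
  shows "c * norm E \<le> norm (Y1 ** E + E ** Y2)"
proof (cases "E = 0")
  case False
  have "c * (norm E)\<^sup>2 \<le> norm E * norm (Y1 ** E + E ** Y2)"
    using inner_sylvester_lower_bound[OF assms, of E] norm_cauchy_schwarz[of E "Y1 ** E + E ** Y2"]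
    by linarith
  with False show ?thesis by (simp add: power2_eq_square)
qed simp

lemma spd_square_eq_imp_eq:
  fixes Y1 Y2 :: "real^'n^'n"
  assumes "spd Y1" "spd Y2" "Y1 ** Y1 = Y2 ** Y2"
  shows "Y1 = Y2"
proof -
  obtain c where c: "c > 0" "\<And>x. c * (norm x)\<^sup>2 \<le> x \<bullet> (Y2 *v x)"
    using spd_coercive[OF assms(2)] by blast
  have "c * norm (Y1 - Y2) \<le> norm (Y1 ** (Y1 - Y2) + (Y1 - Y2) ** Y2)"
    using spd_nonneg[OF assms(1)] c(2) assms(2)
    by (intro norm_sylvester_lower_bound) (auto simp: spd_def)
  also have "Y1 ** (Y1 - Y2) + (Y1 - Y2) ** Y2 = 0"
    using assms(3) by (simp add: matrix_ring_simps)
  finally show ?thesis using c(1) by (simp add: mult_le_0_iff)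
qed

text \<open>Conjugating Y by U yields another positive definite square root of \<open>Y ** Y\<close>.\<close>

lemma spd_commute_orthogonal:
  fixes U Y :: "real^'n^'n"
  assumes U: "orthogonal_matrix U" and Y: "spd Y"
    and conj: "transpose U ** (Y ** Y) ** U = Y ** Y"
  shows "Y ** U = U ** Y"
proof -
  have U1: "transpose U ** U = mat 1" and U2: "U ** transpose U = mat 1"
    using U by (auto simp: orthogonal_matrix_def)
  define Y' where "Y' = transpose U ** Y ** U"
  have "spd Y'"
    unfolding spd_def
  proof (intro conjI allI impI)
    show "transpose Y' = Y'"
      using Y by (simp add: Y'_def spd_def matrix_transpose_mul matrix_mul_assoc)
    fix x :: "real^'n" assume "x \<noteq> 0"
    then have "U *v x \<noteq> 0"
      using U1 by (metis matrix_vector_mul_assoc matrix_vector_mul_lid matrix_vector_mult_0_right)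
    then have "0 < (U *v x) \<bullet> (Y *v (U *v x))" using Y by (simp add: spd_def)
    also have "\<dots> = x \<bullet> (transpose U *v (Y *v (U *v x)))"
      by (metis dot_lmul_matrix vector_transpose_matrix)
    also have "\<dots> = x \<bullet> (Y' *v x)"
      by (simp only: Y'_def matrix_vector_mul_assoc matrix_mul_assoc)
    finally show "0 < x \<bullet> (Y' *v x)" .
  qed
  moreover have "Y' ** Y' = transpose U ** (Y ** Y) ** U"
    by (simp add: Y'_def matrix_mul_assoc) (metis U2 matrix_mul_assoc matrix_mul_rid)
  ultimately have "Y' = Y" using Y conj spd_square_eq_imp_eq by metis
  then show ?thesis by (metis Y'_def U2 matrix_mul_assoc matrix_mul_lid)
qed

lemma transpose_polar_mult_polar:
  fixes Q Y :: "real^'n^'n"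
  assumes "orthogonal_matrix Q" "transpose Y = Y"
  shows "transpose (Q ** Y) ** (Q ** Y) = Y ** Y"
proof -
  have "transpose (Q ** Y) ** (Q ** Y) = transpose Y ** (transpose Q ** Q) ** Y"
    by (simp add: matrix_transpose_mul matrix_mul_assoc)
  with assms show ?thesis by (simp add: orthogonal_matrix_def)
qed

lemma polar_derivative_decomposition:
  fixes Q Y N :: "real^'n^'n"
  assumes Q: "orthogonal_matrix Q" and sym: "transpose Y = Y" and commute: "Y ** N = N ** Y"
  shows "Y ** (Y ** msym N) + (Y ** msym N) ** Y
           = transpose (Q ** Y ** N) ** (Q ** Y) + transpose (Q ** Y) ** (Q ** Y ** N)"
    and "Q ** Y ** N = Q ** (Y ** msym N) + (Q ** mskew N) ** Y"
proof -
  have commute_transpose: "Y ** transpose N = transpose N ** Y"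
    using arg_cong[OF commute, of transpose] by (simp add: matrix_transpose_mul sym)
  have "Y ** (Y ** msym N) + (Y ** msym N) ** Y
      = (1/2) *\<^sub>R (Y ** Y ** N + Y ** Y ** transpose N + Y ** N ** Y + Y ** transpose N ** Y)"
    by (simp add: msym_def matrix_ring_simps matrix_mul_assoc algebra_simps)
  also have "Y ** N ** Y = Y ** Y ** N" by (metis commute matrix_mul_assoc)
  also have "Y ** Y ** transpose N = transpose N ** (Y ** Y)"
    by (metis commute_transpose matrix_mul_assoc)
  also have "Y ** transpose N ** Y = transpose N ** (Y ** Y)"
    by (metis commute_transpose matrix_mul_assoc)
  also have "(1/2) *\<^sub>R (Y ** Y ** N + transpose N ** (Y ** Y) + Y ** Y ** N + transpose N ** (Y ** Y))
      = Y ** Y ** N + transpose N ** (Y ** Y)"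
    by (simp add: vec_eq_iff algebra_simps)
  also have "\<dots> = transpose (Q ** Y ** N) ** (Q ** Y) + transpose (Q ** Y) ** (Q ** Y ** N)"
    using transpose_polar_mult_polar[OF Q sym]
    by (metis add.commute matrix_mul_assoc matrix_transpose_mul)
  finally show "Y ** (Y ** msym N) + (Y ** msym N) ** Y
      = transpose (Q ** Y ** N) ** (Q ** Y) + transpose (Q ** Y) ** (Q ** Y ** N)" .
  have "msym N + mskew N = N"
    by (simp add: msym_def mskew_def scaleR_add_right[symmetric])
  moreover have "mskew N ** Y = Y ** mskew N"
    by (simp add: mskew_def matrix_ring_simps commute commute_transpose)
  ultimately show "Q ** Y ** N = Q ** (Y ** msym N) + (Q ** mskew N) ** Y"
    by (metis matrix_add_ldistrib matrix_mul_assoc)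
qed

lemma rotation_pencil_polar_factor_commute:
  fixes R0 R1 Q Y :: "real^'n^'n" and a b c d :: real
  defines "A \<equiv> a *\<^sub>R R0 + b *\<^sub>R R1" and "B \<equiv> c *\<^sub>R R0 + d *\<^sub>R R1"
  assumes R0: "orthogonal_matrix R0" and R1: "orthogonal_matrix R1" and "invertible A"
    and polar: "A = Q ** Y" "orthogonal_matrix Q" "spd Y"
  shows "Y ** (matrix_inv A ** B) = (matrix_inv A ** B) ** Y"
proof -
  define R where "R = transpose R0 ** R1"
  define M where "M = a *\<^sub>R mat 1 + b *\<^sub>R R"
  define K where "K = c *\<^sub>R mat 1 + d *\<^sub>R R"
  have R: "orthogonal_matrix R"
    using R0 R1 by (simp add: R_def orthogonal_matrix_mul)
  then have RtR: "transpose R ** R = mat 1" and RRt: "R ** transpose R = mat 1"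
    by (auto simp: orthogonal_matrix_def)
  have R0tR0: "transpose R0 ** R0 = mat 1" and "R0 ** transpose R0 = mat 1"
    using R0 by (auto simp: orthogonal_matrix_def)
  then have "R0 ** R = R1" by (simp add: R_def matrix_mul_assoc)
  then have AM: "A = R0 ** M" and BK: "B = R0 ** K"
    by (simp_all add: A_def B_def M_def K_def matrix_ring_simps)
  have "Y ** Y = transpose A ** A"
    using polar transpose_polar_mult_polar by (metis spd_def)
  also have "\<dots> = transpose M ** M"
    by (simp add: AM matrix_transpose_mul matrix_mul_assoc)
      (metis R0tR0 matrix_mul_assoc matrix_mul_lid)
  finally have square: "Y ** Y = transpose M ** M" .
  have "transpose R ** (transpose M ** M) ** R = transpose M ** M"
    by (simp add: M_def matrix_ring_simps RtR RRt matrix_mul_assoc[symmetric])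
  then have "Y ** R = R ** Y"
    using spd_commute_orthogonal[OF R \<open>spd Y\<close>] square by simp
  then have YM: "Y ** M = M ** Y" and YK: "Y ** K = K ** Y"
    by (simp_all add: M_def K_def matrix_ring_simps)
  define N where "N = matrix_inv A ** B"
  have left_inverse: "(matrix_inv A ** R0) ** M = mat 1"
    using matrix_inv_left[OF \<open>invertible A\<close>] by (simp add: AM matrix_mul_assoc)
  have "R0 ** (M ** N) = R0 ** K"
    using matrix_inv_right[OF \<open>invertible A\<close>]
    by (simp add: N_def AM[symmetric] BK[symmetric] matrix_mul_assoc)
  then have MN: "M ** N = K"
    by (metis R0tR0 matrix_mul_assoc matrix_mul_lid)
  have "M ** (Y ** N) = M ** (N ** Y)"
    by (metis MN YK YM matrix_mul_assoc)
  then have "Y ** N = N ** Y"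
    by (metis left_inverse matrix_mul_assoc matrix_mul_lid)
  then show ?thesis by (simp add: N_def)
qed

lemma has_vector_derivative_quadratic_remainder:
  fixes f :: "real \<Rightarrow> 'a::real_normed_vector"
  assumes "d > 0"
    and remainder: "\<forall>s\<in>S. \<bar>s - t\<bar> < d \<longrightarrow> norm (f s - f t - (s - t) *\<^sub>R z) \<le> C * (s - t)\<^sup>2"
  shows "(f has_vector_derivative z) (at t within S)"
  unfolding has_vector_derivative_def has_derivative_within_alt
proof (intro conjI allI impI)
  show "bounded_linear (\<lambda>x. x *\<^sub>R z)" by (rule bounded_linear_scaleR_left)
  fix e :: real assume "e > 0"
  define d' where "d' = min d (e / (\<bar>C\<bar> + 1))"
  have "d' > 0" using \<open>e > 0\<close> \<open>d > 0\<close> by (simp add: d'_def)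
  moreover have "norm (f s - f t - (s - t) *\<^sub>R z) \<le> e * norm (s - t)"
    if "s \<in> S" "norm (s - t) < d'" for s
  proof -
    have "\<bar>s - t\<bar> < d" "(\<bar>C\<bar> + 1) * \<bar>s - t\<bar> \<le> e"
      using that by (auto simp: d'_def pos_less_divide_eq mult.commute less_imp_le)
    have "norm (f s - f t - (s - t) *\<^sub>R z) \<le> C * (s - t)\<^sup>2"
      using remainder that(1) \<open>\<bar>s - t\<bar> < d\<close> by blast
    also have "\<dots> \<le> \<bar>C\<bar> * \<bar>s - t\<bar> * \<bar>s - t\<bar>"
      by (simp add: power2_eq_square abs_mult[symmetric])
    also have "\<dots> \<le> (\<bar>C\<bar> + 1) * \<bar>s - t\<bar> * \<bar>s - t\<bar>"
      by (simp add: mult_right_mono)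
    also have "\<dots> \<le> e * \<bar>s - t\<bar>"
      using \<open>(\<bar>C\<bar> + 1) * \<bar>s - t\<bar> \<le> e\<close> by (simp add: mult_right_mono)
    finally show ?thesis by simp
  qed
  ultimately show "\<exists>d>0. \<forall>s\<in>S. norm (s - t) < d \<longrightarrow>
      norm (f s - f t - (s - t) *\<^sub>R z) \<le> e * norm (s - t)"
    by blast
qed

lemma spd_sqrt_lipschitz_bound:
  fixes Y :: "real \<Rightarrow> real^'n^'n" and G1 G2 :: "real^'n^'n"
  assumes spd: "\<forall>s\<in>S. spd (Y s)" and "t \<in> S"
    and square: "\<forall>s\<in>S. Y s ** Y s = Y t ** Y t + (s - t) *\<^sub>R G1 + (s - t)\<^sup>2 *\<^sub>R G2"
  obtains C1 where "\<forall>s\<in>S. \<bar>s - t\<bar> \<le> 1 \<longrightarrow> norm (Y s - Y t) \<le> C1 * \<bar>s - t\<bar>"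
proof -
  have "spd (Y t)" using spd \<open>t \<in> S\<close> by blast
  then obtain c where c: "c > 0" "\<And>x. c * (norm x)\<^sup>2 \<le> x \<bullet> (Y t *v x)"
    using spd_coercive by blast
  have sym: "transpose (Y t) = Y t" using \<open>spd (Y t)\<close> by (simp add: spd_def)
  have "norm (Y s - Y t) \<le> (norm G1 + norm G2) / c * \<bar>s - t\<bar>"
    if "s \<in> S" "\<bar>s - t\<bar> \<le> 1" for s
  proof -
    define e where "e = s - t"
    have "e\<^sup>2 = \<bar>e\<bar> * \<bar>e\<bar>" by (simp add: power2_eq_square abs_mult_self_eq)
    also have "\<dots> \<le> \<bar>e\<bar>" using that(2) by (metis abs_ge_zero e_def mult_left_le)
    finally have "e\<^sup>2 \<le> \<bar>e\<bar>" .
    have eqD: "Y s ** (Y s - Y t) + (Y s - Y t) ** Y t = e *\<^sub>R G1 + e\<^sup>2 *\<^sub>R G2"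
      using square that(1) by (simp add: e_def matrix_ring_simps)
    have "c * norm (Y s - Y t) \<le> norm (Y s ** (Y s - Y t) + (Y s - Y t) ** Y t)"
      using spd that(1) by (intro norm_sylvester_lower_bound[OF _ c(2) sym] spd_nonneg) blast
    also have "\<dots> \<le> \<bar>e\<bar> * norm G1 + e\<^sup>2 * norm G2"
      unfolding eqD by (rule order_trans[OF norm_triangle_ineq]) simp
    also have "\<dots> \<le> \<bar>e\<bar> * (norm G1 + norm G2)"
      using \<open>e\<^sup>2 \<le> \<bar>e\<bar>\<close> by (simp add: distrib_left mult_right_mono)
    finally show ?thesis
      using c(1) by (simp add: e_def pos_le_divide_eq mult.commute mult.left_commute)
  qed
  with that show ?thesis by blast
qed

lemma spd_sqrt_remainder_bound:
  fixes Y :: "real \<Rightarrow> real^'n^'n" and Z G1 G2 :: "real^'n^'n"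
  assumes spd: "\<forall>s\<in>S. spd (Y s)" and "t \<in> S"
    and square: "\<forall>s\<in>S. Y s ** Y s = Y t ** Y t + (s - t) *\<^sub>R G1 + (s - t)\<^sup>2 *\<^sub>R G2"
    and lyapunov: "Y t ** Z + Z ** Y t = G1"
    and lipschitz: "\<forall>s\<in>S. \<bar>s - t\<bar> \<le> 1 \<longrightarrow> norm (Y s - Y t) \<le> C1 * \<bar>s - t\<bar>"
  obtains C2 where "\<forall>s\<in>S. \<bar>s - t\<bar> \<le> 1 \<longrightarrow> norm (Y s - Y t - (s - t) *\<^sub>R Z) \<le> C2 * (s - t)\<^sup>2"
proof -
  have "spd (Y t)" using spd \<open>t \<in> S\<close> by blast
  then obtain c where c: "c > 0" "\<And>x. c * (norm x)\<^sup>2 \<le> x \<bullet> (Y t *v x)"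
    using spd_coercive by blast
  have sym: "transpose (Y t) = Y t" using \<open>spd (Y t)\<close> by (simp add: spd_def)
  obtain B where B: "B > 0" "\<And>(X::real^'n^'n) (X'::real^'n^'n). norm (X ** X') \<le> norm X * norm X' * B"
    using bounded_bilinear.pos_bounded[OF bounded_bilinear_matrix_mult] by auto
  define C2 where "C2 = (norm G2 + C1 * norm Z * B) / c"
  have "norm (Y s - Y t - (s - t) *\<^sub>R Z) \<le> C2 * (s - t)\<^sup>2" if "s \<in> S" "\<bar>s - t\<bar> \<le> 1" for s
  proof -
    define e where "e = s - t"
    define D where "D = Y s - Y t"
    define E where "E = D - e *\<^sub>R Z"
    have "Y s ** E + E ** Y t = (Y s ** D + D ** Y t) - e *\<^sub>R (Y t ** Z + Z ** Y t + D ** Z)"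
      by (simp add: E_def D_def matrix_ring_simps algebra_simps)
    also have "Y t ** Z + Z ** Y t = G1" by (rule lyapunov)
    also have "Y s ** D + D ** Y t = e *\<^sub>R G1 + e\<^sup>2 *\<^sub>R G2"
      using square that(1) by (simp add: D_def e_def matrix_ring_simps)
    finally have eqE: "Y s ** E + E ** Y t = e\<^sup>2 *\<^sub>R G2 - e *\<^sub>R (D ** Z)"
      by (simp add: algebra_simps)
    have "c * norm E \<le> norm (Y s ** E + E ** Y t)"
      using spd that(1) by (intro norm_sylvester_lower_bound[OF _ c(2) sym] spd_nonneg) blast
    also have "\<dots> \<le> e\<^sup>2 * norm G2 + \<bar>e\<bar> * (norm D * norm Z * B)"
      unfolding eqE by (rule order_trans[OF norm_triangle_ineq4]) (simp add: mult_left_mono[OF B(2)])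
    also have "\<dots> \<le> e\<^sup>2 * norm G2 + \<bar>e\<bar> * (C1 * \<bar>e\<bar> * norm Z * B)"
      using lipschitz that B(1) by (simp add: D_def e_def mult_left_mono mult_right_mono)
    also have "\<dots> = e\<^sup>2 * (norm G2 + C1 * norm Z * B)"
      by (simp add: power2_eq_square algebra_simps abs_mult_self_eq)
    finally show ?thesis
      using c(1) by (simp add: E_def D_def e_def C2_def pos_le_divide_eq mult.commute mult.left_commute)
  qed
  with that show ?thesis by blast
qed

lemma orthogonal_factor_remainder_estimate:
  fixes Q0 Q1 Y0 Y1 Z W :: "real^'n^'n"
  assumes coercive: "\<And>x. c * (norm x)\<^sup>2 \<le> x \<bullet> (Y0 *v x)" and sym: "transpose Y0 = Y0"
    and B: "B > 0" "\<And>(X::real^'n^'n) (X'::real^'n^'n). norm (X ** X') \<le> norm X * norm X' * B"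
    and product: "Q1 ** Y1 = Q0 ** Y0 + e *\<^sub>R (Q0 ** Z + W ** Y0)"
    and D: "norm (Y1 - Y0) \<le> L * \<bar>e\<bar>" and E: "norm (Y1 - Y0 - e *\<^sub>R Z) \<le> K * e\<^sup>2"
  shows "c * norm (Q1 - Q0 - e *\<^sub>R W)
      \<le> e\<^sup>2 * (norm Q0 * K * B + norm W * L * B) + norm (Q1 - Q0 - e *\<^sub>R W) * (L * B * \<bar>e\<bar>)"
proof -
  define D where "D = Y1 - Y0"
  define E where "E = D - e *\<^sub>R Z"
  define F where "F = Q1 - Q0 - e *\<^sub>R W"
  have "F ** Y1 = - (Q0 ** E) - e *\<^sub>R (W ** D)"
    using product by (simp add: F_def E_def D_def matrix_ring_simps algebra_simps)
  then have FY: "F ** Y0 = - (Q0 ** E) - e *\<^sub>R (W ** D) - F ** D"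
    by (simp add: D_def matrix_ring_simps)
  have "c * norm F \<le> norm (0 ** F + F ** Y0)"
    by (rule norm_sylvester_lower_bound[OF _ coercive sym]) simp
  also have "\<dots> \<le> norm Q0 * norm E * B + \<bar>e\<bar> * (norm W * norm D * B) + norm F * norm D * B"
    unfolding FY times0_left add_0_left
    by (intro order_trans[OF norm_triangle_ineq4] add_mono order_trans[OF norm_triangle_ineq4] B)
      (auto simp: B mult_left_mono[OF B(2)])
  also have "\<dots> \<le> norm Q0 * (K * e\<^sup>2) * B + \<bar>e\<bar> * (norm W * (L * \<bar>e\<bar>) * B) + norm F * (L * \<bar>e\<bar>) * B"
    using D E B(1) unfolding D_def E_def by (intro add_mono mult_right_mono mult_left_mono) auto
  also have "\<dots> = e\<^sup>2 * (norm Q0 * K * B + norm W * L * B) + norm F * (L * B * \<bar>e\<bar>)"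
    by (simp add: power2_eq_square algebra_simps abs_mult_self_eq)
  finally show ?thesis by (simp add: F_def)
qed

lemma orthogonal_factor_remainder_bound:
  fixes Q Y :: "real \<Rightarrow> real^'n^'n" and Z W Ad :: "real^'n^'n"
  assumes "spd (Y t)"
    and product: "\<forall>s\<in>S. Q s ** Y s = Q t ** Y t + (s - t) *\<^sub>R Ad"
    and split: "Ad = Q t ** Z + W ** Y t"
    and lipschitz: "\<forall>s\<in>S. \<bar>s - t\<bar> \<le> 1 \<longrightarrow> norm (Y s - Y t) \<le> C1 * \<bar>s - t\<bar>"
    and remainder: "\<forall>s\<in>S. \<bar>s - t\<bar> \<le> 1 \<longrightarrow> norm (Y s - Y t - (s - t) *\<^sub>R Z) \<le> C2 * (s - t)\<^sup>2"
  obtains d C3 where "d > 0"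
    "\<forall>s\<in>S. \<bar>s - t\<bar> < d \<longrightarrow> norm (Q s - Q t - (s - t) *\<^sub>R W) \<le> C3 * (s - t)\<^sup>2"
proof -
  obtain c where c: "c > 0" "\<And>x. c * (norm x)\<^sup>2 \<le> x \<bullet> (Y t *v x)"
    using spd_coercive[OF \<open>spd (Y t)\<close>] by blast
  have sym: "transpose (Y t) = Y t" using \<open>spd (Y t)\<close> by (simp add: spd_def)
  obtain B where B: "B > 0" "\<And>(X::real^'n^'n) (X'::real^'n^'n). norm (X ** X') \<le> norm X * norm X' * B"
    using bounded_bilinear.pos_bounded[OF bounded_bilinear_matrix_mult] by auto
  define k where "k = \<bar>C1\<bar> * B + 1"
  have "k > 0" using B(1) by (simp add: k_def add_nonneg_pos)
  define d where "d = min 1 (c / (2 * k))"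
  define C3 where "C3 = 2 * (norm (Q t) * C2 * B + norm W * \<bar>C1\<bar> * B) / c"
  have "norm (Q s - Q t - (s - t) *\<^sub>R W) \<le> C3 * (s - t)\<^sup>2" if "s \<in> S" "\<bar>s - t\<bar> < d" for s
  proof -
    define e where "e = s - t"
    define F where "F = Q s - Q t - e *\<^sub>R W"
    have "\<bar>e\<bar> \<le> 1" using that(2) by (simp add: e_def d_def)
    then have "norm (Y s - Y t) \<le> C1 * \<bar>e\<bar>" and E: "norm (Y s - Y t - e *\<^sub>R Z) \<le> C2 * e\<^sup>2"
      using lipschitz remainder that(1) by (auto simp: e_def)
    then have D: "norm (Y s - Y t) \<le> \<bar>C1\<bar> * \<bar>e\<bar>"
      by (meson abs_ge_self abs_ge_zero mult_right_mono order_trans)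
    have "k * \<bar>e\<bar> \<le> k * (c / (2 * k))"
      using that(2) \<open>k > 0\<close> by (intro mult_left_mono) (auto simp: e_def d_def)
    also have "\<dots> = c / 2" using \<open>k > 0\<close> by simp
    finally have "\<bar>C1\<bar> * B * \<bar>e\<bar> \<le> c / 2"
      by (simp add: k_def algebra_simps)
    then have "norm F * (\<bar>C1\<bar> * B * \<bar>e\<bar>) \<le> norm F * (c / 2)"
      by (rule mult_left_mono) simp
    moreover have "c * norm F
        \<le> e\<^sup>2 * (norm (Q t) * C2 * B + norm W * \<bar>C1\<bar> * B) + norm F * (\<bar>C1\<bar> * B * \<bar>e\<bar>)"
      using orthogonal_factor_remainder_estimate[OF c(2) sym B, of "Q s" "Y s" "Q t" e Z W, OF _ D E]
        product split that(1)
      by (simp add: F_def e_def)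
    moreover have "e\<^sup>2 * (norm (Q t) * C2 * B + norm W * \<bar>C1\<bar> * B) = (c / 2) * (C3 * e\<^sup>2)"
      using c(1) by (simp add: C3_def)
    moreover have "c * norm F = (c / 2) * norm F + norm F * (c / 2)" by simp
    ultimately have "(c / 2) * norm F \<le> (c / 2) * (C3 * e\<^sup>2)" by linarith
    then show ?thesis using c(1) by (simp add: F_def e_def)
  qed
  moreover have "d > 0" using c(1) \<open>k > 0\<close> by (simp add: d_def)
  ultimately show ?thesis using that by blast
qed

lemma polar_factors_of_affine_path_has_vector_derivative:
  fixes Q Y :: "real \<Rightarrow> real^'n^'n" and Ad Z W :: "real^'n^'n"
  assumes "t \<in> S"
    and polar: "\<forall>s\<in>S. Q s ** Y s = Q t ** Y t + (s - t) *\<^sub>R Ad \<and> orthogonal_matrix (Q s) \<and> spd (Y s)"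
    and lyapunov: "Y t ** Z + Z ** Y t = transpose Ad ** (Q t ** Y t) + transpose (Q t ** Y t) ** Ad"
    and split: "Ad = Q t ** Z + W ** Y t"
  shows "(Y has_vector_derivative Z) (at t within S)"
    and "(Q has_vector_derivative W) (at t within S)"
proof -
  let ?A = "Q t ** Y t"
  have square: "\<forall>s\<in>S. Y s ** Y s = Y t ** Y t + (s - t) *\<^sub>R (transpose Ad ** ?A + transpose ?A ** Ad)
      + (s - t)\<^sup>2 *\<^sub>R (transpose Ad ** Ad)"
  proof
    fix s assume "s \<in> S"
    have gram: "Y r ** Y r = transpose (Q r ** Y r) ** (Q r ** Y r)" if "r \<in> S" for r
      using polar that transpose_polar_mult_polar by (metis spd_def)
    have "transpose (?A + (s - t) *\<^sub>R Ad) ** (?A + (s - t) *\<^sub>R Ad) = transpose ?A ** ?A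
        + (s - t) *\<^sub>R (transpose Ad ** ?A + transpose ?A ** Ad) + (s - t)\<^sup>2 *\<^sub>R (transpose Ad ** Ad)"
      by (simp add: matrix_ring_simps power2_eq_square scaleR_add_right)
    then show "Y s ** Y s = Y t ** Y t + (s - t) *\<^sub>R (transpose Ad ** ?A + transpose ?A ** Ad)
      + (s - t)\<^sup>2 *\<^sub>R (transpose Ad ** Ad)"
      using polar \<open>s \<in> S\<close> by (simp add: gram[OF \<open>s \<in> S\<close>] gram[OF \<open>t \<in> S\<close>])
  qed
  have spd: "\<forall>s\<in>S. spd (Y s)" using polar by blast
  obtain C1 where lipschitz: "\<forall>s\<in>S. \<bar>s - t\<bar> \<le> 1 \<longrightarrow> norm (Y s - Y t) \<le> C1 * \<bar>s - t\<bar>"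
    using spd_sqrt_lipschitz_bound[OF spd \<open>t \<in> S\<close> square] by blast
  obtain C2 where
    remainder: "\<forall>s\<in>S. \<bar>s - t\<bar> \<le> 1 \<longrightarrow> norm (Y s - Y t - (s - t) *\<^sub>R Z) \<le> C2 * (s - t)\<^sup>2"
    using spd_sqrt_remainder_bound[OF spd \<open>t \<in> S\<close> square lyapunov lipschitz] by blast
  then show "(Y has_vector_derivative Z) (at t within S)"
    by (intro has_vector_derivative_quadratic_remainder[of 1]) auto
  obtain d C3 where "d > 0"
    "\<forall>s\<in>S. \<bar>s - t\<bar> < d \<longrightarrow> norm (Q s - Q t - (s - t) *\<^sub>R W) \<le> C3 * (s - t)\<^sup>2"
    using orthogonal_factor_remainder_bound[of Y t S Q Ad Z W C1 C2] polar lipschitz remainder split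
      \<open>t \<in> S\<close> by blast
  then show "(Q has_vector_derivative W) (at t within S)"
    by (rule has_vector_derivative_quadratic_remainder)
qed

lemma polar_factors_has_vector_derivative_if_commute:
  fixes Q Y :: "real \<Rightarrow> real^'n^'n" and Ad :: "real^'n^'n" and t :: real
  defines "N \<equiv> matrix_inv (Q t ** Y t) ** Ad"
  assumes "t \<in> S" and "invertible (Q t ** Y t)"
    and polar: "\<forall>s\<in>S. Q s ** Y s = Q t ** Y t + (s - t) *\<^sub>R Ad \<and> orthogonal_matrix (Q s) \<and> spd (Y s)"
    and commute: "Y t ** N = N ** Y t"
  shows "(Y has_vector_derivative Y t ** msym N) (at t within S)"
    and "(Q has_vector_derivative Q t ** mskew N) (at t within S)"
proof -
  have "orthogonal_matrix (Q t)" and "transpose (Y t) = Y t"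
    using polar \<open>t \<in> S\<close> by (auto simp: spd_def)
  note decomposition = polar_derivative_decomposition[OF this commute]
  have "Q t ** Y t ** N = Ad"
    using matrix_inv_right[OF \<open>invertible (Q t ** Y t)\<close>] by (simp add: N_def matrix_mul_assoc)
  with decomposition have "Y t ** (Y t ** msym N) + (Y t ** msym N) ** Y t
      = transpose Ad ** (Q t ** Y t) + transpose (Q t ** Y t) ** Ad"
    and "Ad = Q t ** (Y t ** msym N) + (Q t ** mskew N) ** Y t"
    by simp_all
  then show "(Y has_vector_derivative Y t ** msym N) (at t within S)"
    and "(Q has_vector_derivative Q t ** mskew N) (at t within S)"
    using polar_factors_of_affine_path_has_vector_derivative[OF \<open>t \<in> S\<close> polar] by blast+
qed

theorem lemma3p1:
  fixes R0 R1 :: "real^'n^'n" and h :: real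
    and A Q Y :: "real \<Rightarrow> real^'n^'n"
  assumes "R0 \<in> SO" and "R1 \<in> SO" and "h > 0"
    and A_def: "\<And>t. A t = ((h - t) / h) *\<^sub>R R0 + (t / h) *\<^sub>R R1"
    and nonsing: "\<And>t. t \<in> {0..h} \<Longrightarrow> invertible (A t)"
    and polar: "\<And>t. t \<in> {0..h} \<Longrightarrow>
                  A t = Q t ** Y t \<and> orthogonal_matrix (Q t) \<and> spd (Y t)"
  shows "\<forall>t \<in> {0..h}.
           (Y has_vector_derivative
              (Y t ** msym (matrix_inv (A t) ** vector_derivative A (at t within {0..h}))))
              (at t within {0..h})
         \<and> (Q has_vector_derivative
              (Q t ** mskew (matrix_inv (A t) ** vector_derivative A (at t within {0..h}))))
              (at t within {0..h})"
proof
  fix t assume t: "t \<in> {0..h}"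
  define Ad where "Ad = (- 1 / h) *\<^sub>R R0 + (1 / h) *\<^sub>R R1"
  have affine: "A s = A t + (s - t) *\<^sub>R Ad" for s
    using \<open>h > 0\<close> by (simp add: A_def Ad_def vec_eq_iff field_simps)
  have "(A has_vector_derivative Ad) (at t within {0..h})"
    by (subst affine[abs_def]) (auto intro!: derivative_eq_intros)
  then have derivative_A: "vector_derivative A (at t within {0..h}) = Ad"
    using vector_derivative_within_closed_interval[OF \<open>h > 0\<close> t] by blast
  have polar_t: "A t = Q t ** Y t" "orthogonal_matrix (Q t)" "spd (Y t)"
    using polar[OF t] by auto
  have orthogonal: "orthogonal_matrix R0" "orthogonal_matrix R1"
    using \<open>R0 \<in> SO\<close> \<open>R1 \<in> SO\<close> by (auto simp: SO_def)
  have "invertible (((h - t) / h) *\<^sub>R R0 + (t / h) *\<^sub>R R1)"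
    and "((h - t) / h) *\<^sub>R R0 + (t / h) *\<^sub>R R1 = Q t ** Y t"
    using nonsing[OF t] polar_t(1) by (simp_all add: A_def)
  then have "Y t ** (matrix_inv (A t) ** Ad) = (matrix_inv (A t) ** Ad) ** Y t"
    unfolding Ad_def A_def
    by (rule rotation_pencil_polar_factor_commute[OF orthogonal _ _ polar_t(2,3)])
  moreover have "\<forall>s\<in>{0..h}. Q s ** Y s = Q t ** Y t + (s - t) *\<^sub>R Ad
      \<and> orthogonal_matrix (Q s) \<and> spd (Y s)"
    using polar affine polar_t(1) by metis
  ultimately show "(Y has_vector_derivative (Y t ** msym (matrix_inv (A t) ** vector_derivative A
        (at t within {0..h})))) (at t within {0..h})
      \<and> (Q has_vector_derivative (Q t ** mskew (matrix_inv (A t) ** vector_derivative A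
        (at t within {0..h})))) (at t within {0..h})"
    using polar_factors_has_vector_derivative_if_commute[OF t] nonsing[OF t]
    unfolding derivative_A polar_t(1) by blast
qed

end
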